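(* Let $U\subset\mathbb{R}^{n\times n}$ be a compact set of matrices. Then every matrix $A\in U$ is stable if and only if there exists an $n\times n$ SOS matrix $P:\mathbb{R}^{n\times n}\to\mathbb{S}^{n\times n}$ such that $P(A)\succ0$ for all $A\in U$ and $P(A)-A^TP(A)A\succ0$ for all $A\in U$.
   Context: A matrix is stable if its spectral radius (maximum modulus of its eigenvalues) is less than one. A polynomial matrix $P$ (symmetric matrix with polynomial entries in the $n^2$ entries of $A$) is an SOS matrix if the scalar polynomial $y^TP(A)y$ in the variables $(A,y)$ is a sum of squares of polynomials. $\succ0$ denotes positive definiteness. *)

theory Defs
  imports "HOL-Analysis.Analysis"
begin

inductive_set poly_funs :: "('a \<Rightarrow> real) set \<Rightarrow> ('a \<Rightarrow> real) set"
  for C :: "('a \<Rightarrow> real) set" where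
  const: "(\<lambda>_. c) \<in> poly_funs C"
| coord: "f \<in> C \<Longrightarrow> f \<in> poly_funs C"
| add: "f \<in> poly_funs C \<Longrightarrow> g \<in> poly_funs C \<Longrightarrow> (\<lambda>x. f x + g x) \<in> poly_funs C"
| mult: "f \<in> poly_funs C \<Longrightarrow> g \<in> poly_funs C \<Longrightarrow> (\<lambda>x. f x * g x) \<in> poly_funs C"

definition poly_in_A :: "(real^'n^'n \<Rightarrow> real) set" where
  "poly_in_A = poly_funs {(\<lambda>A. A $ i $ j) | i j. True}"

definition poly_in_Ay :: "((real^'n^'n) \<times> (real^'n) \<Rightarrow> real) set" where
  "poly_in_Ay = poly_funs ({(\<lambda>(A, y). A $ i $ j) | i j. True} \<union> {(\<lambda>(A, y). y $ i) | i. True})"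

definition is_sos :: "((real^'n^'n) \<times> (real^'n) \<Rightarrow> real) \<Rightarrow> bool" where
  "is_sos f \<longleftrightarrow> (\<exists>qs. (\<forall>q\<in>set qs. q \<in> poly_in_Ay) \<and>
                        (\<forall>z. f z = (\<Sum>q\<leftarrow>qs. (q z)^2)))"

definition sos_matrix :: "(real^'n^'n \<Rightarrow> real^'n^'n) \<Rightarrow> bool" where
  "sos_matrix P \<longleftrightarrow>
     (\<forall>i j. (\<lambda>A. P A $ i $ j) \<in> poly_in_A) \<and>
     (\<forall>A. transpose (P A) = P A) \<and>
     is_sos (\<lambda>(A, y). y \<bullet> (P A *v y))"

definition pos_def :: "real^'n^'n \<Rightarrow> bool" where
  "pos_def M \<longleftrightarrow> transpose M = M \<and> (\<forall>x. x \<noteq> 0 \<longrightarrow> x \<bullet> (M *v x) > 0)"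

definition cmat :: "real^'n^'n \<Rightarrow> complex^'n^'n" where
  "cmat A = (\<chi> i j. complex_of_real (A $ i $ j))"

definition c_eigenvalue :: "real^'n^'n \<Rightarrow> complex \<Rightarrow> bool" where
  "c_eigenvalue A l \<longleftrightarrow> (\<exists>v. v \<noteq> 0 \<and> cmat A *v v = l *s v)"

definition spec_rad :: "real^'n^'n \<Rightarrow> real" where
  "spec_rad A = Max {cmod l | l. c_eigenvalue A l}"

definition stable :: "real^'n^'n \<Rightarrow> bool" where
  "stable A \<longleftrightarrow> spec_rad A < 1"

end

theory Submission
  imports Defs "Jordan_Normal_Form.Spectral_Radius"
begin

text \<open>
  If \<open>P \<succ> 0\<close> and \<open>P - A\<^sup>T P A \<succ> 0\<close>, split an eigenvector of \<open>A\<close> for \<open>\<lambda>\<close> into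
  real and imaginary parts \<open>x + i y\<close>. The quadratic form \<open>q\<close> of \<open>P\<close> satisfies
  \<open>q(A x) + q(A y) = |\<lambda>|\<^sup>2 (q x + q y)\<close>, and the two inequalities force \<open>|\<lambda>| < 1\<close>.

  Conversely, the powers of a stable matrix tend to zero (via its Jordan normal form), so some
  power \<open>A\<^sup>k\<close> has absolute entry sum below 1 and is a contraction. This is an open condition
  in \<open>A\<close>, and compactness of \<open>U\<close> yields a single \<open>N\<close> with \<open>\<parallel>A\<^sup>N y\<parallel> < \<parallel>y\<parallel>\<close> for all
  \<open>A \<in> U\<close>, \<open>y \<noteq> 0\<close>. Then \<open>P(A) = \<Sum>k<N. (A\<^sup>k)\<^sup>T A\<^sup>k\<close> works: \<open>y\<^sup>T P(A) y = \<Sum>k<N. \<parallel>A\<^sup>k y\<parallel>\<^sup>2\<close>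
  is a sum of squares of polynomials in \<open>(A, y)\<close> whose \<open>k = 0\<close> term is \<open>\<parallel>y\<parallel>\<^sup>2\<close>, and
  \<open>y\<^sup>T (P(A) - A\<^sup>T P(A) A) y = \<parallel>y\<parallel>\<^sup>2 - \<parallel>A\<^sup>N y\<parallel>\<^sup>2\<close> by telescoping.
\<close>

no_notation Matrix.scalar_prod (infix \<open>\<bullet>\<close> 70)
no_notation Matrix.vec_index (infixl \<open>$\<close> 100)
hide_const (open) Matrix.mat

section \<open>Polynomial functions\<close>

lemma poly_funs_sum:
  assumes "finite S" "\<And>s. s \<in> S \<Longrightarrow> f s \<in> poly_funs C"
  shows "(\<lambda>x. \<Sum>s\<in>S. f s x) \<in> poly_funs C"
  using assms
proof (induction S rule: finite_induct)
  case empty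
  show ?case using poly_funs.const[of 0 C] by simp
next
  case (insert a F)
  then show ?case using poly_funs.add[of "f a" C "\<lambda>x. \<Sum>s\<in>F. f s x"] by simp
qed

lemma poly_funs_compose:
  assumes "f \<in> poly_funs C" "\<And>g. g \<in> C \<Longrightarrow> g \<circ> h \<in> poly_funs D"
  shows "f \<circ> h \<in> poly_funs D"
  using assms
proof (induction rule: poly_funs.induct)
  case (const c)
  show ?case using poly_funs.const[of c D] by (simp add: comp_def)
next
  case (coord f)
  then show ?case by blast
next
  case (add f g)
  then show ?case using poly_funs.add[of "f \<circ> h" D "g \<circ> h"] by (simp add: comp_def)
next
  case (mult f g)
  then show ?case using poly_funs.mult[of "f \<circ> h" D "g \<circ> h"] by (simp add: comp_def)
qed

lemma continuous_on_poly_funs: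
  assumes "f \<in> poly_funs C" "\<And>g. g \<in> C \<Longrightarrow> continuous_on UNIV g"
  shows "continuous_on UNIV f"
  using assms by (induction rule: poly_funs.induct) (auto intro!: continuous_intros)

lemma poly_in_A_entry: "(\<lambda>A. A $ i $ j) \<in> poly_in_A"
  unfolding poly_in_A_def by (rule poly_funs.coord) blast

lemma continuous_on_poly_in_A: "f \<in> poly_in_A \<Longrightarrow> continuous_on UNIV f"
  unfolding poly_in_A_def by (erule continuous_on_poly_funs) (auto intro!: continuous_intros)

lemma poly_in_Ay_fst:
  assumes "f \<in> poly_in_A"
  shows "(\<lambda>z. f (fst z)) \<in> poly_in_Ay"
proof -
  have "g \<circ> fst \<in> poly_in_Ay" if "g \<in> {(\<lambda>A. A $ i $ j) | i j. True}" for g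
  proof -
    from that obtain i j where "g = (\<lambda>A. A $ i $ j)" by blast
    then have "g \<circ> fst = (\<lambda>(A, y). A $ i $ j)" by auto
    then show ?thesis unfolding poly_in_Ay_def by (auto intro: poly_funs.coord)
  qed
  then have "f \<circ> fst \<in> poly_in_Ay"
    using poly_funs_compose assms unfolding poly_in_A_def poly_in_Ay_def by blast
  then show ?thesis by (simp add: comp_def)
qed

lemma poly_in_Ay_snd_component: "(\<lambda>z. snd z $ i) \<in> poly_in_Ay"
proof -
  have "(\<lambda>z. snd z $ i) = (\<lambda>(A, y). y $ i)" by auto
  then show ?thesis unfolding poly_in_Ay_def by (auto intro: poly_funs.coord)
qed

lemma is_sos_sum:
  assumes "finite I" "\<And>i. i \<in> I \<Longrightarrow> q i \<in> poly_in_Ay" "\<And>z. f z = (\<Sum>i\<in>I. (q i z)\<^sup>2)"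
  shows "is_sos f"
proof -
  obtain xs where xs: "set xs = I" "distinct xs"
    using finite_distinct_list[OF assms(1)] by blast
  have "f z = (\<Sum>p\<leftarrow>map q xs. (p z)\<^sup>2)" for z
    using xs by (simp add: assms(3) o_def sum_list_distinct_conv_sum_set)
  then show ?thesis
    unfolding is_sos_def using assms(2) xs(1) by (intro exI[of _ "map q xs"]) auto
qed

section \<open>Matrices\<close>

lemma matrix_transpose_diff:
  "transpose (X - Y) = transpose X - transpose (Y :: 'a::ab_group_add^'n^'m)"
  by (simp add: transpose_def Finite_Cartesian_Product.vec_eq_iff)

lemma matrix_transpose_sum:
  "transpose (\<Sum>k\<in>S. M k) = (\<Sum>k\<in>S. transpose (M k :: 'a::comm_monoid_add^'n^'m))"
  by (simp add: transpose_def Finite_Cartesian_Product.vec_eq_iff sum_component)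

lemma sum_matrix_vector_mult: "(\<Sum>k\<in>S. M k) *v x = (\<Sum>k\<in>S. M k *v (x :: 'a::semiring_1^'n))"
  by (induction S rule: infinite_finite_induct) (auto simp: matrix_vector_mult_add_rdistrib)

lemma inner_symmetric_matrix_vector_mult:
  "transpose M = M \<Longrightarrow> x \<bullet> (M *v y) = y \<bullet> (M *v (x :: real^'n))"
  by (metis dot_lmul_matrix inner_commute transpose_matrix_vector)

lemma inner_transpose_congruence:
  "x \<bullet> ((transpose A ** M ** A) *v x) = (A *v x) \<bullet> (M *v (A *v (x :: real^'n)))"
  by (metis dot_lmul_matrix inner_commute matrix_vector_mul_assoc transpose_matrix_vector)

fun matpow :: "'a::semiring_1^'n^'n \<Rightarrow> nat \<Rightarrow> 'a^'n^'n" where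
  "matpow A 0 = mat 1"
| "matpow A (Suc k) = matpow A k ** A"

lemma matpow_add: "matpow A (k + l) = matpow A k ** matpow A l"
  by (induction l) (auto simp: matrix_mul_assoc)

lemma matpow_scaleR: "matpow (c *\<^sub>R A) k = c ^ k *\<^sub>R matpow (A :: real^'n^'n) k"
  by (induction k) (simp_all add: matrix_scalar_ac scalar_matrix_assoc)

lemma matpow_entry_poly_in_A: "(\<lambda>A. matpow A k $ i $ j) \<in> poly_in_A"
proof (induction k arbitrary: i j)
  case 0
  show ?case
    by (simp add: Finite_Cartesian_Product.mat_def poly_in_A_def poly_funs.const)
next
  case (Suc k)
  have "(\<lambda>A. \<Sum>l\<in>UNIV. matpow A k $ i $ l * A $ l $ j) \<in> poly_in_A"
    using Suc poly_in_A_entry unfolding poly_in_A_def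
    by (intro poly_funs_sum poly_funs.mult) auto
  then show ?case by (simp add: matrix_matrix_mult_def)
qed

definition abs_entry_sum :: "real^'n^'m \<Rightarrow> real" where
  "abs_entry_sum M = (\<Sum>i\<in>UNIV. \<Sum>j\<in>UNIV. \<bar>M $ i $ j\<bar>)"

lemma abs_entry_sum_nonneg: "0 \<le> abs_entry_sum M"
  unfolding abs_entry_sum_def by (intro sum_nonneg) auto

lemma norm_matrix_vector_mult_le: "norm (M *v x) \<le> abs_entry_sum M * norm x"
  using onorm[OF matrix_vector_mul_bounded_linear, of M x]
    onorm_le_matrix_component_sum[of M]
  unfolding abs_entry_sum_def by (meson mult_right_mono norm_ge_zero order_trans)

lemma continuous_on_abs_entry_sum_matpow: "continuous_on UNIV (\<lambda>A. abs_entry_sum (matpow A k))"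
  unfolding abs_entry_sum_def
  by (intro continuous_on_sum continuous_on_rabs continuous_on_poly_in_A matpow_entry_poly_in_A)

lemma norm_matpow_mult_vector_le:
  "norm (matpow A (k * m) *v x) \<le> abs_entry_sum (matpow A k) ^ m * norm x"
proof (induction m arbitrary: x)
  case 0
  then show ?case by simp
next
  case (Suc m)
  have "matpow A (k * Suc m) *v x = matpow A (k * m) *v (matpow A k *v x)"
    by (simp add: matpow_add[symmetric] matrix_vector_mul_assoc add.commute)
  also have "norm \<dots> \<le> abs_entry_sum (matpow A k) ^ m * norm (matpow A k *v x)"
    by (rule Suc.IH)
  also have "\<dots> \<le> abs_entry_sum (matpow A k) ^ m * (abs_entry_sum (matpow A k) * norm x)"
    by (intro mult_left_mono norm_matrix_vector_mult_le zero_le_power abs_entry_sum_nonneg)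
  finally show ?case by (simp add: mult_ac)
qed

lemma matpow_contracts:
  assumes "abs_entry_sum (matpow A k) < 1" "0 < m" "x \<noteq> 0"
  shows "norm (matpow A (k * m) *v x) < norm x"
proof -
  have "abs_entry_sum (matpow A k) ^ m < 1"
    using power_strict_mono[OF assms(1) abs_entry_sum_nonneg assms(2)] by simp
  then have "abs_entry_sum (matpow A k) ^ m * norm x < norm x"
    using assms(3) by simp
  then show ?thesis using norm_matpow_mult_vector_le[of A k m x] by linarith
qed

section \<open>Eigenvalues through the Jordan normal form library\<close>

text \<open>The spectral theory of the JNF library is stated for matrices of type \<open>'a mat\<close>; a
  Cartesian matrix is transported there along an arbitrary enumeration of its index type.\<close>

definition of_index :: "nat \<Rightarrow> 'n::finite" where
  "of_index = (SOME f. bij_betw f {..<CARD('n)} UNIV)"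

definition to_index :: "'n::finite \<Rightarrow> nat" where
  "to_index = inv_into {..<CARD('n)} of_index"

lemma bij_betw_of_index: "bij_betw (of_index :: nat \<Rightarrow> 'n::finite) {..<CARD('n)} UNIV"
proof -
  have "\<exists>f. bij_betw f {..<CARD('n)} (UNIV :: 'n set)"
    using ex_bij_betw_nat_finite[of "UNIV :: 'n set"] by (simp add: atLeast0LessThan)
  then show ?thesis unfolding of_index_def by (rule someI_ex)
qed

lemma to_index_less [simp]: "to_index (a :: 'n::finite) < CARD('n)"
  using bij_betw_of_index[where 'n='n] unfolding to_index_def
  by (metis UNIV_I bij_betw_def inv_into_into lessThan_iff)

lemma of_index_to_index [simp]: "of_index (to_index a) = (a :: 'n::finite)"
  using bij_betw_of_index[where 'n='n] unfolding to_index_def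
  by (metis UNIV_I bij_betw_def f_inv_into_f)

lemma to_index_of_index [simp]: "i < CARD('n) \<Longrightarrow> to_index (of_index i :: 'n::finite) = i"
  using bij_betw_of_index[where 'n='n] unfolding to_index_def
  by (simp add: bij_betw_def inv_into_f_f)

lemma sum_of_index: "(\<Sum>i<CARD('n). g (of_index i :: 'n::finite)) = (\<Sum>a\<in>UNIV. g a)"
  by (rule sum.reindex_bij_betw[OF bij_betw_of_index])

definition mat_of_cart :: "'a^'n^'n \<Rightarrow> 'a mat" where
  "mat_of_cart X = Matrix.mat CARD('n) CARD('n) (\<lambda>(i, j). X $ of_index i $ of_index j)"

definition vec_of_cart :: "'a^'n \<Rightarrow> 'a Matrix.vec" where
  "vec_of_cart v = Matrix.vec CARD('n) (\<lambda>i. v $ of_index i)"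

lemma mat_of_cart_carrier [simp]: "mat_of_cart (X :: 'a^'n^'n) \<in> carrier_mat CARD('n) CARD('n)"
  and dim_row_mat_of_cart [simp]: "dim_row (mat_of_cart X) = CARD('n)"
  and dim_col_mat_of_cart [simp]: "dim_col (mat_of_cart X) = CARD('n)"
  by (simp_all add: mat_of_cart_def)

lemma index_mat_of_cart [simp]:
  "i < CARD('n) \<Longrightarrow> j < CARD('n) \<Longrightarrow>
    mat_of_cart (X :: 'a^'n^'n) $$ (i, j) = X $ of_index i $ of_index j"
  by (simp add: mat_of_cart_def)

lemma vec_of_cart_carrier [simp]: "vec_of_cart (v :: 'a^'n) \<in> carrier_vec CARD('n)"
  and dim_vec_of_cart [simp]: "dim_vec (vec_of_cart v) = CARD('n)"
  by (simp_all add: vec_of_cart_def)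

lemma index_vec_of_cart [simp]:
  "i < CARD('n) \<Longrightarrow> vec_index (vec_of_cart (v :: 'a^'n)) i = v $ of_index i"
  by (simp add: vec_of_cart_def)

lemma vec_of_cart_eq_iff: "vec_of_cart v = vec_of_cart w \<longleftrightarrow> v = (w :: 'a^'n)"
proof
  assume "vec_of_cart v = vec_of_cart w"
  then have "v $ a = w $ a" for a
    by (metis index_vec_of_cart of_index_to_index to_index_less)
  then show "v = w" by (simp add: Finite_Cartesian_Product.vec_eq_iff)
qed simp

lemma vec_of_cart_zero: "vec_of_cart (0 :: 'a::zero^'n) = 0\<^sub>v CARD('n)"
  by (rule eq_vecI) auto

lemma vec_of_cart_smult: "vec_of_cart (c *s v) = c \<cdot>\<^sub>v vec_of_cart (v :: 'a::times^'n)"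
  by (rule eq_vecI) auto

lemma vec_of_cart_surj:
  "w \<in> carrier_vec CARD('n) \<Longrightarrow> vec_of_cart (\<chi> a. vec_index w (to_index a) :: 'a^'n) = w"
  by (rule eq_vecI) auto

lemma mat_of_cart_mult:
  "mat_of_cart (X ** Y) = mat_of_cart X * mat_of_cart (Y :: 'a::semiring_1^'n^'n)"
proof (rule eq_matI)
  fix i j
  assume "i < dim_row (mat_of_cart X * mat_of_cart Y)" "j < dim_col (mat_of_cart X * mat_of_cart Y)"
  then have ij: "i < CARD('n)" "j < CARD('n)" by auto
  have "(mat_of_cart X * mat_of_cart Y) $$ (i, j)
      = (\<Sum>l<CARD('n). X $ of_index i $ of_index l * Y $ of_index l $ of_index j)"
    using ij by (simp add: scalar_prod_def atLeast0LessThan)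
  also have "\<dots> = (\<Sum>a\<in>UNIV. X $ of_index i $ a * Y $ a $ of_index j)"
    by (rule sum_of_index)
  also have "\<dots> = (X ** Y) $ of_index i $ of_index j"
    by (simp add: matrix_matrix_mult_def)
  finally show "mat_of_cart (X ** Y) $$ (i, j) = (mat_of_cart X * mat_of_cart Y) $$ (i, j)"
    using ij by simp
qed auto

lemma mat_of_cart_one: "mat_of_cart (mat 1 :: 'a::{zero,one}^'n^'n) = 1\<^sub>m CARD('n)"
proof (rule eq_matI)
  fix i j assume "i < dim_row (1\<^sub>m CARD('n))" "j < dim_col (1\<^sub>m CARD('n))"
  then have ij: "i < CARD('n)" "j < CARD('n)" by auto
  then have "(of_index i :: 'n) = of_index j \<longleftrightarrow> i = j"
    by (metis to_index_of_index)
  then show "mat_of_cart (mat 1 :: 'a^'n^'n) $$ (i, j) = 1\<^sub>m CARD('n) $$ (i, j)"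
    using ij by (simp add: Finite_Cartesian_Product.mat_def)
qed auto

lemma mat_of_cart_mult_vec:
  "mat_of_cart X *\<^sub>v vec_of_cart v = vec_of_cart (X *v (v :: 'a::semiring_1^'n))"
proof (rule eq_vecI)
  fix i assume "i < dim_vec (vec_of_cart (X *v v))"
  then have i: "i < CARD('n)" by simp
  have "vec_index (mat_of_cart X *\<^sub>v vec_of_cart v) i
      = (\<Sum>l<CARD('n). X $ of_index i $ of_index l * v $ of_index l)"
    using i by (simp add: scalar_prod_def atLeast0LessThan)
  also have "\<dots> = (\<Sum>a\<in>UNIV. X $ of_index i $ a * v $ a)"
    by (rule sum_of_index)
  also have "\<dots> = vec_index (vec_of_cart (X *v v)) i"
    using i by (simp add: matrix_vector_mult_def)
  finally show "vec_index (mat_of_cart X *\<^sub>v vec_of_cart v) i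
      = vec_index (vec_of_cart (X *v v)) i" .
qed simp

lemma mat_of_cart_matpow: "mat_of_cart (matpow X k) = mat_of_cart X ^\<^sub>m k"
  by (induction k) (simp_all add: mat_of_cart_one mat_of_cart_mult)

lemma eigenvalue_mat_of_cart:
  "eigenvalue (mat_of_cart X) l \<longleftrightarrow> (\<exists>v. v \<noteq> 0 \<and> X *v v = l *s (v :: 'a::field^'n))"
proof
  assume "eigenvalue (mat_of_cart X) l"
  then obtain w where w: "w \<in> carrier_vec CARD('n)" "w \<noteq> 0\<^sub>v CARD('n)"
    "mat_of_cart X *\<^sub>v w = l \<cdot>\<^sub>v w"
    unfolding eigenvalue_def eigenvector_def by auto
  define v where "v = (\<chi> a. vec_index w (to_index a) :: 'a^'n)"
  have wv: "vec_of_cart v = w" unfolding v_def by (rule vec_of_cart_surj[OF w(1)])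
  have "v \<noteq> 0" using w(2) wv vec_of_cart_zero by metis
  moreover have "X *v v = l *s v"
    using w(3) wv
    by (simp flip: vec_of_cart_eq_iff add: mat_of_cart_mult_vec[symmetric] vec_of_cart_smult)
  ultimately show "\<exists>v. v \<noteq> 0 \<and> X *v v = l *s v" by blast
next
  assume "\<exists>v. v \<noteq> 0 \<and> X *v v = l *s v"
  then obtain v where v: "v \<noteq> 0" "X *v v = l *s v" by blast
  have "vec_of_cart v \<noteq> 0\<^sub>v CARD('n)" using v(1) vec_of_cart_eq_iff vec_of_cart_zero by metis
  moreover have "mat_of_cart X *\<^sub>v vec_of_cart v = l \<cdot>\<^sub>v vec_of_cart v"
    by (simp add: mat_of_cart_mult_vec v(2) vec_of_cart_smult)
  ultimately show "eigenvalue (mat_of_cart X) l"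
    unfolding eigenvalue_def eigenvector_def by (intro exI[of _ "vec_of_cart v"]) simp
qed

lemma c_eigenvalue_iff_spectrum: "c_eigenvalue A l \<longleftrightarrow> l \<in> spectrum (mat_of_cart (cmat A))"
  by (simp add: c_eigenvalue_def spectrum_def eigenvalue_mat_of_cart)

lemma finite_c_eigenvalues: "finite {l. c_eigenvalue A l}"
  using card_finite_spectrum(1)[OF mat_of_cart_carrier] by (simp add: c_eigenvalue_iff_spectrum)

lemma c_eigenvalue_exists: "\<exists>l. c_eigenvalue A l"
  using spectrum_non_empty[OF mat_of_cart_carrier] by (auto simp: c_eigenvalue_iff_spectrum)

lemma cmod_le_spec_rad: "c_eigenvalue A l \<Longrightarrow> cmod l \<le> spec_rad A"
  unfolding spec_rad_def using finite_c_eigenvalues[of A]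
  by (intro Max_ge) (auto simp: setcompr_eq_image)

lemma stable_iff_eigenvalues: "stable A \<longleftrightarrow> (\<forall>l. c_eigenvalue A l \<longrightarrow> cmod l < 1)"
  unfolding stable_def spec_rad_def setcompr_eq_image
  using finite_c_eigenvalues[of A] c_eigenvalue_exists[of A] by (subst Max_less_iff) auto

lemma cmat_mult: "cmat (A ** B) = cmat A ** cmat B"
  by (simp add: cmat_def matrix_matrix_mult_def Finite_Cartesian_Product.vec_eq_iff)

lemma cmat_one: "cmat (mat 1) = mat 1"
  by (simp add: cmat_def Finite_Cartesian_Product.mat_def Finite_Cartesian_Product.vec_eq_iff)

lemma cmat_matpow: "cmat (matpow A k) = matpow (cmat A) k"
  by (induction k) (simp_all add: cmat_mult cmat_one)

lemma matpow_entries_bounded: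
  assumes "\<forall>l. c_eigenvalue A l \<longrightarrow> cmod l < 1"
  obtains c where "\<And>k i j. \<bar>matpow A k $ i $ j\<bar> \<le> c"
proof -
  let ?M = "mat_of_cart (cmat A)"
  obtain l where "l \<in> spectrum ?M" "spectral_radius ?M = cmod l"
    using spectral_radius_mem_max(1)[OF mat_of_cart_carrier, of "cmat A"] by auto
  with assms have "spectral_radius ?M < 1" by (simp add: c_eigenvalue_iff_spectrum)
  then obtain c where c: "\<And>k. norm_bound (?M ^\<^sub>m k) c"
    using spectral_radius_jnf_norm_bound_less_1_upper_triangular[OF mat_of_cart_carrier] by blast
  have "\<bar>matpow A k $ i $ j\<bar> \<le> c" for k i j
  proof -
    have "(?M ^\<^sub>m k) $$ (to_index i, to_index j) = complex_of_real (matpow A k $ i $ j)"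
      by (simp flip: mat_of_cart_matpow cmat_matpow) (simp add: cmat_def)
    then show ?thesis
      using c[of k] unfolding norm_bound_def by (metis dim_col_mat_of_cart dim_row_mat_of_cart
          mat_of_cart_matpow norm_of_real to_index_less)
  qed
  then show ?thesis by (rule that)
qed

section \<open>Powers of stable matrices\<close>

lemma c_eigenvalue_scaleR: "c_eigenvalue A l \<Longrightarrow> c_eigenvalue (r *\<^sub>R A) (complex_of_real r * l)"
proof -
  assume "c_eigenvalue A l"
  then obtain v where v: "v \<noteq> 0" "cmat A *v v = l *s v"
    unfolding c_eigenvalue_def by blast
  have "cmat (r *\<^sub>R A) *v v = complex_of_real r *s (cmat A *v v)"
    by (simp add: cmat_def matrix_vector_mult_def Finite_Cartesian_Product.vec_eq_iff
        sum_distrib_left mult_ac)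
  also have "\<dots> = (complex_of_real r * l) *s v"
    by (simp add: v(2) vector_smult_assoc)
  finally show ?thesis unfolding c_eigenvalue_def using v(1) by blast
qed

lemma stable_imp_abs_entry_sum_matpow_tendsto_0:
  assumes "stable (A :: real^'n^'n)"
  shows "(\<lambda>k. abs_entry_sum (matpow A k)) \<longlonglongrightarrow> 0"
proof -
  have "0 \<le> spec_rad A"
    using c_eigenvalue_exists[of A] cmod_le_spec_rad norm_ge_zero order_trans by blast
  define r where "r = (1 + spec_rad A) / 2"
  have r: "0 < r" "r < 1" "spec_rad A < r"
    using assms \<open>0 \<le> spec_rad A\<close> unfolding stable_def r_def by auto
  define B where "B = (1 / r) *\<^sub>R A"
  have A_eq: "A = r *\<^sub>R B"
    using r(1) by (simp add: B_def)
  \<comment> \<open>Rescaling by \<open>r\<close> pushes the spectrum into the open unit disc, where powers stay bounded.\<close>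
  have "cmod l < 1" if "c_eigenvalue B l" for l
  proof -
    have "r * cmod l \<le> spec_rad A"
      using cmod_le_spec_rad[OF c_eigenvalue_scaleR[OF that, of r]] r(1)
      by (simp add: A_eq norm_mult)
    then have "r * cmod l < r * 1"
      using r by linarith
    then show ?thesis
      using r(1) by (simp only: mult_less_cancel_left_pos)
  qed
  then obtain c where c: "\<And>k i j. \<bar>matpow B k $ i $ j\<bar> \<le> c"
    using matpow_entries_bounded by blast
  let ?g = "\<lambda>k. real CARD('n) * (real CARD('n) * (r ^ k * c))"
  have bound: "abs_entry_sum (matpow A k) \<le> ?g k" for k
  proof -
    have "\<bar>matpow A k $ i $ j\<bar> \<le> r ^ k * c" for i j
      using c[of k i j] r(1) by (simp add: A_eq matpow_scaleR abs_mult mult_left_mono)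
    then show ?thesis
      unfolding abs_entry_sum_def by (intro sum_bounded_above[THEN order_trans] mult_left_mono) auto
  qed
  have "?g \<longlonglongrightarrow> 0"
    using r by (intro tendsto_mult_right_zero tendsto_mult_left_zero LIMSEQ_power_zero) auto
  then show ?thesis
    by (rule Lim_null_comparison[rotated]) (simp add: bound abs_entry_sum_nonneg always_eventually)
qed

lemma uniform_contracting_power:
  fixes U :: "(real^'n^'n) set"
  assumes "compact U" and "\<forall>A\<in>U. stable A"
  obtains N where "0 < N" "\<And>A x. A \<in> U \<Longrightarrow> x \<noteq> 0 \<Longrightarrow> norm (matpow A N *v x) < norm x"
proof -
  have "\<exists>k>0. abs_entry_sum (matpow A k) < 1" if "A \<in> U" for A
  proof -
    have "eventually (\<lambda>k. abs_entry_sum (matpow A k) < 1) sequentially"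
      using assms(2) that
      by (intro order_tendstoD(2)[OF stable_imp_abs_entry_sum_matpow_tendsto_0]) auto
    then obtain k0 where k0: "\<And>k. k0 \<le> k \<Longrightarrow> abs_entry_sum (matpow A k) < 1"
      by (auto simp: eventually_sequentially)
    show ?thesis
      using k0[of "Suc k0"] by (intro exI[of _ "Suc k0"]) simp
  qed
  then obtain K where K: "\<And>A. A \<in> U \<Longrightarrow> 0 < K A \<and> abs_entry_sum (matpow A (K A)) < 1"
    by metis
  \<comment> \<open>Each \<open>A \<in> U\<close> has a neighbourhood on which \<open>K A\<close> is a contracting exponent.\<close>
  have "open {X. abs_entry_sum (matpow X (K A)) < 1}" for A
    by (rule open_Collect_less[OF continuous_on_abs_entry_sum_matpow continuous_on_const])
  moreover have "U \<subseteq> (\<Union>A\<in>U. {X. abs_entry_sum (matpow X (K A)) < 1})"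
    using K by auto
  ultimately obtain D where D: "D \<subseteq> U" "finite D"
    "U \<subseteq> (\<Union>A\<in>D. {X. abs_entry_sum (matpow X (K A)) < 1})"
    by (rule compactE_image[OF assms(1)]) blast
  define N where "N = (\<Prod>A\<in>D. K A)"
  have "0 < N" unfolding N_def using D K by (auto intro: prod_pos)
  moreover have "norm (matpow A N *v x) < norm x" if "A \<in> U" "x \<noteq> 0" for A x
  proof -
    obtain A0 where A0: "A0 \<in> D" "abs_entry_sum (matpow A (K A0)) < 1"
      using D(3) \<open>A \<in> U\<close> by blast
    have "K A0 dvd N" unfolding N_def using D(2) A0(1) by auto
    then obtain m where m: "N = K A0 * m" by blast
    with \<open>0 < N\<close> have "0 < m" by simp
    show ?thesis using matpow_contracts[OF A0(2) \<open>0 < m\<close> \<open>x \<noteq> 0\<close>] m by simp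
  qed
  ultimately show ?thesis using that by blast
qed

section \<open>Lyapunov inequalities force stability\<close>

lemma c_eigenvalue_real_form:
  assumes "c_eigenvalue A l"
  obtains x y where "x \<noteq> 0 \<or> y \<noteq> 0"
    "A *v x = Re l *\<^sub>R x - Im l *\<^sub>R y" "A *v y = Im l *\<^sub>R x + Re l *\<^sub>R y"
proof -
  obtain v where v: "v \<noteq> 0" "cmat A *v v = l *s v"
    using assms unfolding c_eigenvalue_def by blast
  define x where "x = (\<chi> i. Re (v $ i))"
  define y where "y = (\<chi> i. Im (v $ i))"
  have row: "(\<Sum>j\<in>UNIV. complex_of_real (A $ i $ j) * v $ j) = l * v $ i" for i
    using arg_cong[OF v(2), of "\<lambda>w. w $ i"] by (simp add: cmat_def matrix_vector_mult_def)
  have "A *v x = Re l *\<^sub>R x - Im l *\<^sub>R y"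
    using arg_cong[OF row, of Re]
    by (simp add: Finite_Cartesian_Product.vec_eq_iff matrix_vector_mult_def x_def y_def Re_sum)
  moreover have "A *v y = Im l *\<^sub>R x + Re l *\<^sub>R y"
    using arg_cong[OF row, of Im]
    by (simp add: Finite_Cartesian_Product.vec_eq_iff matrix_vector_mult_def x_def y_def Im_sum)
  moreover have "x \<noteq> 0 \<or> y \<noteq> 0"
    using v(1) by (auto simp: x_def y_def Finite_Cartesian_Product.vec_eq_iff complex_eq_iff)
  ultimately show ?thesis using that by blast
qed

lemma pos_def_quadratic_form_nonneg: "pos_def M \<Longrightarrow> 0 \<le> x \<bullet> (M *v x)"
  unfolding pos_def_def by (cases "x = 0") (auto intro: less_imp_le)

lemma pos_def_quadratic_forms_pos:
  "pos_def M \<Longrightarrow> x \<noteq> 0 \<or> y \<noteq> 0 \<Longrightarrow> 0 < x \<bullet> (M *v x) + y \<bullet> (M *v y)"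
  by (metis add_nonneg_pos add_pos_nonneg pos_def_def pos_def_quadratic_form_nonneg)

lemma lyapunov_imp_eigenvalue_less_1:
  fixes A P :: "real^'n^'n"
  assumes P: "pos_def P" and Q: "pos_def (P - transpose A ** P ** A)" and "c_eigenvalue A l"
  shows "cmod l < 1"
proof -
  obtain x y where xy: "x \<noteq> 0 \<or> y \<noteq> 0"
    and Ax: "A *v x = Re l *\<^sub>R x - Im l *\<^sub>R y" and Ay: "A *v y = Im l *\<^sub>R x + Re l *\<^sub>R y"
    using c_eigenvalue_real_form[OF \<open>c_eigenvalue A l\<close>] by blast
  define q where "q u = u \<bullet> (P *v u)" for u
  have Q_form: "u \<bullet> ((P - transpose A ** P ** A) *v u) = q u - q (A *v u)" for u
    unfolding q_def
    by (simp add: matrix_vector_mult_diff_rdistrib inner_diff_right inner_transpose_congruence)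
  have swap: "y \<bullet> (P *v x) = x \<bullet> (P *v y)"
    using P by (simp add: pos_def_def inner_symmetric_matrix_vector_mult)
  have "q (A *v x) + q (A *v y) = (cmod l)\<^sup>2 * (q x + q y)"
  proof -
    define a b where "a = Re l" and "b = Im l"
    have "q (A *v x) + q (A *v y) = (a\<^sup>2 + b\<^sup>2) * (q x + q y)"
      unfolding Ax Ay q_def a_def[symmetric] b_def[symmetric]
      by (simp add: matrix_vector_mult_diff_distrib matrix_vector_right_distrib
          matrix_vector_mult_scaleR inner_diff_left inner_diff_right inner_add_left inner_add_right
          swap algebra_simps power2_eq_square)
    then show ?thesis by (simp add: cmod_power2 a_def b_def)
  qed
  moreover have "0 < q x - q (A *v x) + (q y - q (A *v y))"
    using pos_def_quadratic_forms_pos[OF Q xy] by (simp add: Q_form)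
  ultimately have "0 < (1 - (cmod l)\<^sup>2) * (q x + q y)"
    by (simp add: algebra_simps)
  moreover have "0 < q x + q y"
    using pos_def_quadratic_forms_pos[OF P xy] by (simp add: q_def)
  ultimately have "(cmod l)\<^sup>2 < 1"
    by (simp add: zero_less_mult_iff)
  then show ?thesis
    by (simp add: power_less_one_iff)
qed

section \<open>The Lyapunov sum\<close>

definition lyapunov_sum :: "nat \<Rightarrow> real^'n^'n \<Rightarrow> real^'n^'n" where
  "lyapunov_sum N A = (\<Sum>k<N. transpose (matpow A k) ** matpow A k)"

lemma transpose_lyapunov_sum: "transpose (lyapunov_sum N A) = lyapunov_sum N A"
  by (simp add: lyapunov_sum_def matrix_transpose_sum matrix_transpose_mul)

lemma lyapunov_sum_quadratic_form:
  "x \<bullet> (lyapunov_sum N A *v x) = (\<Sum>k<N. (norm (matpow A k *v x))\<^sup>2)"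
  by (simp add: lyapunov_sum_def sum_matrix_vector_mult inner_sum_right
      inner_transpose_congruence[where M = "mat 1", simplified] power2_norm_eq_inner)

lemma lyapunov_sum_difference_quadratic_form:
  "x \<bullet> ((lyapunov_sum N A - transpose A ** lyapunov_sum N A ** A) *v x)
    = (norm x)\<^sup>2 - (norm (matpow A N *v x))\<^sup>2"
proof -
  have "x \<bullet> ((transpose A ** lyapunov_sum N A ** A) *v x)
      = (\<Sum>k<N. (norm (matpow A (Suc k) *v x))\<^sup>2)"
    by (simp only: inner_transpose_congruence lyapunov_sum_quadratic_form)
      (simp add: matrix_vector_mul_assoc)
  then have "x \<bullet> ((lyapunov_sum N A - transpose A ** lyapunov_sum N A ** A) *v x)
      = (\<Sum>k<N. (norm (matpow A k *v x))\<^sup>2 - (norm (matpow A (Suc k) *v x))\<^sup>2)"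
    by (simp add: matrix_vector_mult_diff_rdistrib inner_diff_right lyapunov_sum_quadratic_form
        sum_subtractf)
  also have "\<dots> = (norm x)\<^sup>2 - (norm (matpow A N *v x))\<^sup>2"
    using sum_lessThan_telescope'[of "\<lambda>k. (norm (matpow A k *v x))\<^sup>2" N] by simp
  finally show ?thesis .
qed

lemma sos_matrix_lyapunov_sum: "sos_matrix (lyapunov_sum N :: real^'n^'n \<Rightarrow> real^'n^'n)"
  unfolding sos_matrix_def
proof (intro conjI allI)
  fix i j
  have "lyapunov_sum N A $ i $ j = (\<Sum>k<N. \<Sum>l\<in>UNIV. matpow A k $ l $ i * matpow A k $ l $ j)" for A
    by (simp add: lyapunov_sum_def sum_component matrix_matrix_mult_def transpose_def)
  then show "(\<lambda>A. lyapunov_sum N A $ i $ j) \<in> poly_in_A"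
    using matpow_entry_poly_in_A unfolding poly_in_A_def
    by (simp, intro poly_funs_sum poly_funs.mult) auto
next
  fix A :: "real^'n^'n"
  show "transpose (lyapunov_sum N A) = lyapunov_sum N A"
    by (rule transpose_lyapunov_sum)
next
  \<comment> \<open>The squares are the entries of \<open>A\<^sup>k y\<close>, for \<open>k < N\<close>.\<close>
  let ?q = "\<lambda>p (z :: (real^'n^'n) \<times> (real^'n)). (matpow (fst z) (fst p) *v snd z) $ snd p"
  have q_poly: "?q p \<in> poly_in_Ay" for p
  proof -
    have "?q p = (\<lambda>z. \<Sum>j\<in>UNIV. matpow (fst z) (fst p) $ snd p $ j * snd z $ j)"
      by (simp add: matrix_vector_mult_def)
    also have "\<dots> \<in> poly_in_Ay"
      using poly_in_Ay_fst[OF matpow_entry_poly_in_A] poly_in_Ay_snd_component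
      unfolding poly_in_Ay_def by (intro poly_funs_sum poly_funs.mult) auto
    finally show ?thesis .
  qed
  have q_sum: "(\<lambda>(A, y). y \<bullet> (lyapunov_sum N A *v y)) z = (\<Sum>p\<in>{..<N} \<times> UNIV. (?q p z)\<^sup>2)" for z
  proof -
    obtain A y where z: "z = (A, y)" by fastforce
    have "y \<bullet> (lyapunov_sum N A *v y) = (\<Sum>k<N. (norm (matpow A k *v y))\<^sup>2)"
      by (rule lyapunov_sum_quadratic_form)
    also have "\<dots> = (\<Sum>k<N. \<Sum>i\<in>UNIV. ((matpow A k *v y) $ i)\<^sup>2)"
      by (simp add: power2_norm_eq_inner inner_vec_def flip: power2_eq_square)
    finally show ?thesis
      by (simp add: z sum.cartesian_product case_prod_beta)
  qed
  show "is_sos (\<lambda>(A, y :: real^'n). y \<bullet> (lyapunov_sum N A *v y))"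
    by (rule is_sos_sum[of "{..<N} \<times> UNIV" ?q]) (use q_poly q_sum in auto)
qed

lemma pos_def_lyapunov_sum:
  fixes A :: "real^'n^'n"
  assumes "0 < N"
  shows "pos_def (lyapunov_sum N A)"
  unfolding pos_def_def
proof (intro conjI allI impI transpose_lyapunov_sum)
  fix x :: "real^'n" assume "x \<noteq> 0"
  have "0 < (norm (matpow A 0 *v x))\<^sup>2"
    using \<open>x \<noteq> 0\<close> by simp
  also have "\<dots> \<le> (\<Sum>k<N. (norm (matpow A k *v x))\<^sup>2)"
    using assms by (intro member_le_sum) auto
  finally show "0 < x \<bullet> (lyapunov_sum N A *v x)"
    by (simp add: lyapunov_sum_quadratic_form)
qed

lemma pos_def_lyapunov_sum_difference:
  fixes A :: "real^'n^'n"
  assumes "\<And>x. x \<noteq> 0 \<Longrightarrow> norm (matpow A N *v x) < norm x"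
  shows "pos_def (lyapunov_sum N A - transpose A ** lyapunov_sum N A ** A)"
  unfolding pos_def_def
proof (intro conjI allI impI)
  show "transpose (lyapunov_sum N A - transpose A ** lyapunov_sum N A ** A)
      = lyapunov_sum N A - transpose A ** lyapunov_sum N A ** A"
    by (simp add: matrix_transpose_diff matrix_transpose_mul transpose_lyapunov_sum
        matrix_mul_assoc)
next
  fix x :: "real^'n" assume "x \<noteq> 0"
  then have "(norm (matpow A N *v x))\<^sup>2 < (norm x)\<^sup>2"
    using assms by (intro power_strict_mono) auto
  then show "0 < x \<bullet> ((lyapunov_sum N A - transpose A ** lyapunov_sum N A ** A) *v x)"
    by (simp add: lyapunov_sum_difference_quadratic_form)
qed

theorem lemma22:
  fixes U :: "(real^'n^'n) set"
  assumes "compact U"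
  shows "(\<forall>A\<in>U. stable A) \<longleftrightarrow>
         (\<exists>P :: real^'n^'n \<Rightarrow> real^'n^'n. sos_matrix P \<and>
              (\<forall>A\<in>U. pos_def (P A)) \<and>
              (\<forall>A\<in>U. pos_def (P A - transpose A ** P A ** A)))"
proof
  assume "\<forall>A\<in>U. stable A"
  then obtain N where "0 < N" and "\<And>A x. A \<in> U \<Longrightarrow> x \<noteq> 0 \<Longrightarrow> norm (matpow A N *v x) < norm x"
    using uniform_contracting_power[OF assms] by blast
  then show "\<exists>P. sos_matrix P \<and> (\<forall>A\<in>U. pos_def (P A)) \<and>
      (\<forall>A\<in>U. pos_def (P A - transpose A ** P A ** A))"
    by (intro exI[of _ "lyapunov_sum N"])
      (simp add: sos_matrix_lyapunov_sum pos_def_lyapunov_sum pos_def_lyapunov_sum_difference)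
next
  assume "\<exists>P. sos_matrix P \<and> (\<forall>A\<in>U. pos_def (P A)) \<and>
      (\<forall>A\<in>U. pos_def (P A - transpose A ** P A ** A))"
  then show "\<forall>A\<in>U. stable A"
    using lyapunov_imp_eigenvalue_less_1 stable_iff_eigenvalues by blast
qed

end
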